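(* Let $(T,f)$ be a merge tree and $\sigma\colon[0,1]\to T$ a curve. Any two distinct maximal violating subcurves of $\sigma$ are interior-disjoint.
   Context: A merge tree $(T,f)$: a finite rooted tree $T$ identified with its topological realisation, with a continuous $f\colon T\to\mathbb{R}\cup\{\infty\}$ strictly increasing towards the root, $f(v)=\infty$ iff $v$ is the root. A curve on $T$ is a continuous map $\sigma\colon[0,1]\to T$. A subcurve $[\ell,r]$ ($\ell,r\in[0,1]$) of $\sigma$ is violating if $\ell<r$, $\sigma(\ell)=\sigma(r)$, and $f(\sigma(t))>f(\sigma(\ell))$ for all $t\in(\ell,r)$. A violating subcurve is maximal if the interval is not contained in (the interval of) any other violating subcurve of $\sigma$. Two subcurves $[\ell_1,r_1],[\ell_2,r_2]$ are interior-disjoint if $(\ell_1,r_1)\cap(\ell_2,r_2)=\emptyset$. *)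

theory Defs
  imports "HOL-Analysis.Analysis" "HOL-Library.Extended_Real"
begin

definition rooted_tree :: "'v::finite \<Rightarrow> ('v \<Rightarrow> 'v) \<Rightarrow> bool" where
  "rooted_tree r par \<longleftrightarrow> par r = r \<and> (\<forall>v. \<exists>n. (par ^^ n) v = r)"

definition tree_realisation :: "'v::finite \<Rightarrow> ('v \<Rightarrow> 'v) \<Rightarrow> (real^'v) set" where
  "tree_realisation r par =
     {axis r 1} \<union> (\<Union>v\<in>-{r}. closed_segment (axis v 1) (axis (par v) 1))"

definition merge_tree :: "'v::finite \<Rightarrow> ('v \<Rightarrow> 'v) \<Rightarrow> (real^'v \<Rightarrow> ereal) \<Rightarrow> bool" where
  "merge_tree r par f \<longleftrightarrow>
     rooted_tree r par \<and>
     continuous_on (tree_realisation r par) f \<and>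
     (\<forall>x\<in>tree_realisation r par. f x \<noteq> -\<infinity>) \<and>
     (\<forall>x\<in>tree_realisation r par. f x = \<infinity> \<longleftrightarrow> x = axis r 1) \<and>
     (\<forall>g. arc g \<and> path_image g \<subseteq> tree_realisation r par \<and> pathfinish g = axis r 1
          \<longrightarrow> strict_mono_on {0..1} (f \<circ> g))"

definition curve_on :: "(real^'v) set \<Rightarrow> (real \<Rightarrow> real^'v) \<Rightarrow> bool" where
  "curve_on T \<sigma> \<longleftrightarrow> continuous_on {0..1} \<sigma> \<and> \<sigma> ` {0..1} \<subseteq> T"

definition violating :: "('a \<Rightarrow> ereal) \<Rightarrow> (real \<Rightarrow> 'a) \<Rightarrow> real \<Rightarrow> real \<Rightarrow> bool" where
  "violating f \<sigma> l r \<longleftrightarrow> l \<in> {0..1} \<and> r \<in> {0..1} \<and> l < r \<and> \<sigma> l = \<sigma> r \<and>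
     (\<forall>t\<in>{l<..<r}. f (\<sigma> t) > f (\<sigma> l))"

definition maximal_violating :: "('a \<Rightarrow> ereal) \<Rightarrow> (real \<Rightarrow> 'a) \<Rightarrow> real \<Rightarrow> real \<Rightarrow> bool" where
  "maximal_violating f \<sigma> l r \<longleftrightarrow> violating f \<sigma> l r \<and>
     (\<forall>l' r'. violating f \<sigma> l' r' \<and> {l..r} \<subseteq> {l'..r'} \<longrightarrow> (l', r') = (l, r))"

end

theory Submission
  imports Defs
begin

text \<open>If l1 < l2 < r1 < r2, then f(\<sigma> l1) < f(\<sigma> l2) < f(\<sigma> r1) = f(\<sigma> l1); so overlapping
  violating subcurves are nested, and maximality forces nested maximal ones to coincide.\<close>

lemma violating_not_crossing:
  assumes "violating f \<sigma> l1 r1" and "violating f \<sigma> l2 r2"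
    and "l1 < l2" and "l2 < r1"
  shows "r2 \<le> r1"
proof (rule ccontr)
  assume "\<not> r2 \<le> r1"
  then have "r1 \<in> {l2<..<r2}" using \<open>l2 < r1\<close> by auto
  then have "f (\<sigma> r1) > f (\<sigma> l2)" using assms(2) unfolding violating_def by blast
  moreover have "f (\<sigma> l2) > f (\<sigma> l1)" and "\<sigma> r1 = \<sigma> l1"
    using assms(1,3,4) unfolding violating_def by auto
  ultimately show False by simp
qed

lemma violating_overlap_nested:
  assumes "violating f \<sigma> l1 r1" and "violating f \<sigma> l2 r2"
    and "{l1<..<r1} \<inter> {l2<..<r2} \<noteq> {}"
  shows "{l1..r1} \<subseteq> {l2..r2} \<or> {l2..r2} \<subseteq> {l1..r1}"
proof -
  have "l2 < r1" and "l1 < r2" using assms(3) by auto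
  consider "l1 < l2" | "l2 < l1" | "l1 = l2" by linarith
  then show ?thesis
  proof cases
    case 1
    then show ?thesis using violating_not_crossing[OF assms(1,2)] \<open>l2 < r1\<close> by auto
  next
    case 2
    then show ?thesis using violating_not_crossing[OF assms(2,1)] \<open>l1 < r2\<close> by auto
  next
    case 3
    then show ?thesis by (cases "r1 \<le> r2") auto
  qed
qed

lemma maximal_violating_interior_disjoint:
  assumes "maximal_violating f \<sigma> l1 r1" and "maximal_violating f \<sigma> l2 r2"
    and "(l1, r1) \<noteq> (l2, r2)"
  shows "{l1<..<r1} \<inter> {l2<..<r2} = {}"
proof (rule ccontr)
  assume overlap: "{l1<..<r1} \<inter> {l2<..<r2} \<noteq> {}"
  have "violating f \<sigma> l1 r1" and "violating f \<sigma> l2 r2"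
    using assms(1,2) unfolding maximal_violating_def by auto
  then have "{l1..r1} \<subseteq> {l2..r2} \<or> {l2..r2} \<subseteq> {l1..r1}"
    using overlap by (rule violating_overlap_nested)
  then show False using assms unfolding maximal_violating_def by blast
qed

theorem lemma18:
  fixes r :: "'v::finite" and par :: "'v \<Rightarrow> 'v" and f :: "real^'v \<Rightarrow> ereal"
    and \<sigma> :: "real \<Rightarrow> real^'v" and l1 r1 l2 r2 :: real
  assumes "merge_tree r par f"
    and "curve_on (tree_realisation r par) \<sigma>"
    and "maximal_violating f \<sigma> l1 r1"
    and "maximal_violating f \<sigma> l2 r2"
    and "(l1, r1) \<noteq> (l2, r2)"
  shows "{l1<..<r1} \<inter> {l2<..<r2} = {}"
  using assms(3-5) by (rule maximal_violating_interior_disjoint)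

end
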